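(* For every $n\ge 1$, \[ |\mathrm{End}(P_n)| = \begin{cases} (n+1)2^{n-1} - (2n-1)\binom{n-1}{(n-1)/2} & \text{if } n \text{ is odd},\\[2pt] (n+1)2^{n-1} - n\binom{n}{n/2} & \text{if } n \text{ is even}.\end{cases} \]
   Context: For a positive integer $n$, $P_n$ denotes the path with vertex set $[n]=\{1,\dots,n\}$ in which $i$ and $j$ are adjacent iff $|i-j|=1$. $\mathrm{End}(P_n)$ is the set of endomorphisms of $P_n$, i.e. maps $f:[n]\to[n]$ with $|f(i)-f(i+1)|=1$ for all $1\le i\le n-1$. *)

theory Defs
  imports Main "HOL-Library.FuncSet"
begin

text \<open>Endomorphisms of the path P_n on vertex set {1..n}: maps f from {1..n} to {1..n}
  (represented extensionally, i.e. f is undefined outside {1..n}) with |f(i) - f(i+1)| = 1.\<close>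
definition path_End :: "nat \<Rightarrow> (nat \<Rightarrow> nat) set" where
  "path_End n = {f \<in> {1..n} \<rightarrow>\<^sub>E {1..n}.
      \<forall>i. 1 \<le> i \<and> i \<le> n - 1 \<longrightarrow> \<bar>int (f i) - int (f (i + 1))\<bar> = 1}"

end

theory Submission
  imports Defs
begin

(* An endomorphism of P_(m+1) is determined by its starting value s = f 1 and by its
   step sequence xs in {-1,1}^m, i.e. it is the walk of s along xs.  A pair (xs, s)
   gives an endomorphism iff the walk stays inside [1, m+1], i.e. iff
   1 - min_pref xs <= s <= m + 1 - max_pref xs, where max_pref / min_pref are the
   largest / smallest prefix sums.  Hence
     |End(P_(m+1))| = sum over xs of (m + 1 - max_pref xs + min_pref xs)
                    = (m+1) 2^m - 2 * max_total m,
   using the symmetry xs -> -xs, where max_total m is the sum of max_pref over {-1,1}^m.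
   By the reflection principle the number of sequences with maximal prefix sum k is
   m choose ((m+k+1) div 2), which yields a linear recurrence for max_total; solving it
   separately for even and odd m gives the closed form of the theorem. *)

fun max_pref :: "int list \<Rightarrow> int" where
  "max_pref [] = 0"
| "max_pref (x # xs) = max 0 (x + max_pref xs)"

fun min_pref :: "int list \<Rightarrow> int" where
  "min_pref [] = 0"
| "min_pref (x # xs) = min 0 (x + min_pref xs)"

lemma max_pref_nonneg: "max_pref xs \<ge> 0"
  by (cases xs) auto

lemma min_pref_nonpos: "min_pref xs \<le> 0"
  by (cases xs) auto

lemma min_pref_neg: "min_pref xs = - max_pref (map uminus xs)"
  by (induction xs) auto

lemma pref_spread:
  assumes "set xs \<subseteq> {-1, 1}"
  shows "max_pref xs - min_pref xs \<le> int (length xs)"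
  using assms
proof (induction xs)
  case (Cons x xs)
  then show ?case using max_pref_nonneg[of xs] min_pref_nonpos[of xs] by auto
qed simp

fun walk :: "int \<Rightarrow> int list \<Rightarrow> int list" where
  "walk s [] = [s]"
| "walk s (x # xs) = s # walk (s + x) xs"

lemma length_walk [simp]: "length (walk s xs) = Suc (length xs)"
  by (induction xs arbitrary: s) auto

lemma walk_not_Nil [simp]: "walk s xs \<noteq> []"
  by (cases xs) auto

lemma walk_inj: "walk s xs = walk t ys \<Longrightarrow> s = t \<and> xs = ys"
proof (induction xs arbitrary: s t ys)
  case Nil
  then show ?case by (cases ys) (auto dest: sym)
next
  case (Cons x xs)
  then obtain y ys' where "ys = y # ys'"
    by (cases ys) auto
  with Cons.prems Cons.IH[of "s + x" "t + y" ys'] show ?case by auto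
qed

lemma walk_within:
  "set (walk s xs) \<subseteq> {a..b} \<longleftrightarrow> a \<le> s + min_pref xs \<and> s + max_pref xs \<le> b"
  by (induction xs arbitrary: s) auto

fun unit_steps :: "int list \<Rightarrow> bool" where
  "unit_steps (x # y # r) \<longleftrightarrow> \<bar>x - y\<bar> = 1 \<and> unit_steps (y # r)"
| "unit_steps _ \<longleftrightarrow> True"

lemma unit_steps_iff_nth: "unit_steps ws \<longleftrightarrow> (\<forall>i. Suc i < length ws \<longrightarrow> \<bar>ws ! i - ws ! Suc i\<bar> = 1)"
proof (induction ws rule: unit_steps.induct)
  case (1 x y r)
  show ?case
    unfolding unit_steps.simps 1 by (auto simp: nth_Cons split: nat.splits)
qed auto

lemma unit_steps_walk: "set xs \<subseteq> {-1, 1} \<Longrightarrow> unit_steps (walk s xs)"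
proof (induction xs arbitrary: s)
  case (Cons x xs)
  then show ?case by (cases xs) auto
qed simp

lemma unit_steps_imp_walk:
  "unit_steps ws \<Longrightarrow> ws \<noteq> [] \<Longrightarrow>
     \<exists>xs. set xs \<subseteq> {-1, 1} \<and> length xs = length ws - 1 \<and> walk (hd ws) xs = ws"
proof (induction ws rule: unit_steps.induct)
  case (1 x y r)
  then obtain xs where xs: "set xs \<subseteq> {-1, 1}" "length xs = length r" "walk y xs = y # r"
    by auto
  have "y - x \<in> {-1, 1}" using "1.prems" by (auto simp: abs_if split: if_splits)
  with xs show ?case by (intro exI[of _ "(y - x) # xs"]) auto
qed auto

definition value_lists :: "nat \<Rightarrow> int list set" where
  "value_lists n = {ws. length ws = n \<and> set ws \<subseteq> {1..int n} \<and> unit_steps ws}"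

definition value_list :: "nat \<Rightarrow> (nat \<Rightarrow> nat) \<Rightarrow> int list" where
  "value_list n f = map (\<lambda>i. int (f (Suc i))) [0..<n]"

definition value_fun :: "nat \<Rightarrow> int list \<Rightarrow> nat \<Rightarrow> nat" where
  "value_fun n ws = (\<lambda>i. if i \<in> {1..n} then nat (ws ! (i - 1)) else undefined)"

lemma nth_value_list [simp]: "i < n \<Longrightarrow> value_list n f ! i = int (f (Suc i))"
  by (simp add: value_list_def)

lemma value_fun_value_list:
  assumes "f \<in> path_End n"
  shows "value_fun n (value_list n f) = f"
proof (rule ext)
  fix i
  have f: "f \<in> {1..n} \<rightarrow>\<^sub>E {1..n}" using assms by (simp add: path_End_def)
  show "value_fun n (value_list n f) i = f i"
  proof (cases "i \<in> {1..n}")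
    case True
    then obtain k where k: "i = Suc k" "k < n"
      by (cases i) auto
    then show ?thesis
      by (simp add: value_fun_def)
  next
    case False
    then have "f i = undefined"
      using f by (simp add: PiE_arb[of f])
    with False show ?thesis
      by (auto simp: value_fun_def)
  qed
qed

lemma value_list_value_fun:
  assumes "ws \<in> value_lists n"
  shows "value_list n (value_fun n ws) = ws"
proof (rule nth_equalityI)
  show "length (value_list n (value_fun n ws)) = length ws"
    using assms by (simp add: value_list_def value_lists_def)
  fix i assume "i < length (value_list n (value_fun n ws))"
  then have i: "i < n" by (simp add: value_list_def)
  then have "ws ! i \<in> set ws"
    using assms by (simp add: value_lists_def)
  then have "ws ! i \<ge> 1"
    using assms by (auto simp: value_lists_def)
  with i show "value_list n (value_fun n ws) ! i = ws ! i"
    by (simp add: value_fun_def)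
qed

lemma value_list_mem:
  assumes "f \<in> path_End n"
  shows "value_list n f \<in> value_lists n"
proof -
  have "f (Suc i) \<in> {1..n}" if "i < n" for i
    using assms that by (auto simp: path_End_def)
  then have "set (value_list n f) \<subseteq> {1..int n}"
    by (auto simp: value_list_def)
  moreover have "\<bar>int (f (Suc i)) - int (f (Suc (Suc i)))\<bar> = 1" if "Suc i < n" for i
    using assms that by (auto simp: path_End_def)
  then have "unit_steps (value_list n f)"
    by (simp add: unit_steps_iff_nth value_list_def)
  ultimately show ?thesis
    by (simp add: value_lists_def value_list_def)
qed

lemma value_fun_mem:
  assumes ws: "ws \<in> value_lists n"
  shows "value_fun n ws \<in> path_End n"
proof -
  have rng: "ws ! i \<in> {1..int n}" if "i < n" for i
  proof -
    have "ws ! i \<in> set ws"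
      using ws that by (simp add: value_lists_def)
    then show ?thesis
      using ws by (auto simp: value_lists_def)
  qed
  have steps: "\<bar>ws ! i - ws ! Suc i\<bar> = 1" if "Suc i < n" for i
    using ws that by (simp add: value_lists_def unit_steps_iff_nth)
  have "value_fun n ws \<in> {1..n} \<rightarrow>\<^sub>E {1..n}"
  proof (rule PiE_I)
    fix i assume "i \<in> {1..n}"
    then obtain k where "i = Suc k" "k < n"
      by (cases i) auto
    then show "value_fun n ws i \<in> {1..n}"
      using rng[of k] by (auto simp: value_fun_def)
  qed (auto simp: value_fun_def)
  moreover have "\<bar>int (value_fun n ws i) - int (value_fun n ws (i + 1))\<bar> = 1"
    if i: "1 \<le> i" "i \<le> n - 1" for i
  proof -
    obtain k where k: "i = Suc k" "Suc k < n"
      using i by (cases i) auto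
    then show ?thesis
      using steps[of k] rng[of k] rng[of "Suc k"] by (simp add: value_fun_def)
  qed
  ultimately show ?thesis
    by (simp add: path_End_def)
qed

lemma bij_value_list: "bij_betw (value_list n) (path_End n) (value_lists n)"
  by (rule bij_betw_byWitness[where f' = "value_fun n"])
     (auto simp: value_fun_value_list value_list_value_fun value_list_mem value_fun_mem)

definition sign_seqs :: "nat \<Rightarrow> int list set" where
  "sign_seqs m = {xs. set xs \<subseteq> {-1, 1} \<and> length xs = m}"

lemma finite_sign_seqs: "finite (sign_seqs m)"
  unfolding sign_seqs_def by (rule finite_lists_length_eq) simp

lemma card_sign_seqs: "card (sign_seqs m) = 2 ^ m"
  by (simp add: sign_seqs_def card_lists_length_eq numeral_2_eq_2)

(* Admissible pairs (steps, start): the walk stays inside [1, m+1]. *)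
definition admissible_pairs :: "nat \<Rightarrow> (int list \<times> int) set" where
  "admissible_pairs m = (SIGMA xs : sign_seqs m. {1 - min_pref xs .. int (Suc m) - max_pref xs})"

lemma bij_walk_value_lists:
  "bij_betw (\<lambda>(xs, s). walk s xs) (admissible_pairs m) (value_lists (Suc m))"
proof (rule bij_betw_imageI)
  show "inj_on (\<lambda>(xs, s). walk s xs) (admissible_pairs m)"
    by (rule inj_onI) (auto dest: walk_inj)
  show "(\<lambda>(xs, s). walk s xs) ` admissible_pairs m = value_lists (Suc m)"
  proof
    show "(\<lambda>(xs, s). walk s xs) ` admissible_pairs m \<subseteq> value_lists (Suc m)"
    proof clarify
      fix xs s assume "(xs, s) \<in> admissible_pairs m"
      then have "set xs \<subseteq> {-1, 1}" "length xs = m" "set (walk s xs) \<subseteq> {1..int (Suc m)}"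
        by (auto simp: admissible_pairs_def sign_seqs_def walk_within)
      then show "walk s xs \<in> value_lists (Suc m)"
        by (simp add: value_lists_def unit_steps_walk)
    qed
    show "value_lists (Suc m) \<subseteq> (\<lambda>(xs, s). walk s xs) ` admissible_pairs m"
    proof
      fix ws assume ws: "ws \<in> value_lists (Suc m)"
      then have "unit_steps ws" "ws \<noteq> []" by (auto simp: value_lists_def)
      then obtain xs where xs: "set xs \<subseteq> {-1, 1}" "length xs = m" "walk (hd ws) xs = ws"
        using unit_steps_imp_walk ws by (fastforce simp: value_lists_def)
      moreover have "set (walk (hd ws) xs) \<subseteq> {1..int (Suc m)}"
        using ws xs by (simp add: value_lists_def)
      ultimately have "(xs, hd ws) \<in> admissible_pairs m"
        unfolding walk_within by (simp add: admissible_pairs_def sign_seqs_def)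
      then show "ws \<in> (\<lambda>(xs, s). walk s xs) ` admissible_pairs m"
        using xs(3) by (intro image_eqI[of _ _ "(xs, hd ws)"]) simp_all
    qed
  qed
qed

definition max_total :: "nat \<Rightarrow> int" where
  "max_total m = (\<Sum>xs \<in> sign_seqs m. max_pref xs)"

(* By the reflection xs -> -xs, the minimal prefix sums total - max_total m. *)
lemma sum_min_pref: "(\<Sum>xs \<in> sign_seqs m. min_pref xs) = - max_total m"
proof -
  have "(\<Sum>xs \<in> sign_seqs m. max_pref (map uminus xs)) = max_total m"
    unfolding max_total_def
    by (rule sum.reindex_bij_witness[where i = "map uminus" and j = "map uminus"])
       (auto simp: sign_seqs_def)
  then show ?thesis
    by (simp add: min_pref_neg sum_negf)
qed

(* Summing the number of admissible starts over all step sequences. *)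
lemma card_path_End_Suc:
  "int (card (path_End (Suc m))) = int (Suc m) * 2 ^ m - 2 * max_total m"
proof -
  have "card (path_End (Suc m)) = card (admissible_pairs m)"
    using bij_betw_same_card[OF bij_value_list] bij_betw_same_card[OF bij_walk_value_lists]
    by simp
  also have "\<dots> = (\<Sum>xs \<in> sign_seqs m. card {1 - min_pref xs .. int (Suc m) - max_pref xs})"
    unfolding admissible_pairs_def by (rule card_SigmaI) (auto simp: finite_sign_seqs)
  finally have card_eq: "card (path_End (Suc m)) =
      (\<Sum>xs \<in> sign_seqs m. card {1 - min_pref xs .. int (Suc m) - max_pref xs})" .
  have "int (card {1 - min_pref xs .. int (Suc m) - max_pref xs}) =
      int (Suc m) - max_pref xs + min_pref xs" if "xs \<in> sign_seqs m" for xs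
    using pref_spread[of xs] that by (simp add: sign_seqs_def)
  then have "int (card (path_End (Suc m))) =
      (\<Sum>xs \<in> sign_seqs m. int (Suc m) - max_pref xs + min_pref xs)"
    unfolding card_eq of_nat_sum by (rule sum.cong[OF refl])
  also have "\<dots> = int (Suc m) * 2 ^ m - 2 * max_total m"
    by (simp add: sum.distrib sum_subtractf sum_min_pref card_sign_seqs flip: max_total_def)
  finally show ?thesis .
qed

lemma sum_sign_seqs_Suc:
  "(\<Sum>xs \<in> sign_seqs (Suc m). f xs) = (\<Sum>xs \<in> sign_seqs m. f (1 # xs) + f ((-1) # xs))"
proof -
  have split: "sign_seqs (Suc m) = (#) 1 ` sign_seqs m \<union> (#) (-1) ` sign_seqs m"
    by (auto simp: sign_seqs_def length_Suc_conv)
  have "(\<Sum>xs \<in> sign_seqs (Suc m). f xs) =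
      (\<Sum>xs \<in> (#) 1 ` sign_seqs m. f xs) + (\<Sum>xs \<in> (#) (-1) ` sign_seqs m. f xs)"
    unfolding split by (rule sum.union_disjoint) (auto simp: finite_sign_seqs)
  also have "\<dots> = (\<Sum>xs \<in> sign_seqs m. f (1 # xs)) + (\<Sum>xs \<in> sign_seqs m. f ((-1) # xs))"
    by (simp add: sum.reindex)
  finally show ?thesis
    by (simp add: sum.distrib)
qed

definition count_max :: "nat \<Rightarrow> nat \<Rightarrow> nat" where
  "count_max m k = card {xs \<in> sign_seqs m. max_pref xs = int k}"

(* The count as a sum of indicators, so that it can be split by the first step. *)
lemma count_max_sum: "count_max m k = (\<Sum>xs \<in> sign_seqs m. of_bool (max_pref xs = int k))"
  by (simp add: count_max_def finite_sign_seqs Collect_conj_eq Int_commute)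

(* Prepending +1 raises the maximum by one, prepending -1 lowers it by one
   (but not below 0). *)
lemma count_max_Suc:
  "count_max (Suc m) k = (if k = 0 then count_max m 0 else count_max m (k - 1)) + count_max m (Suc k)"
proof -
  have "of_bool (max_pref (1 # xs) = int k) + of_bool (max_pref ((-1) # xs) = int k) =
      (if k = 0 then of_bool (max_pref xs = 0) else of_bool (max_pref xs = int (k - 1)))
      + (of_bool (max_pref xs = int (Suc k)) :: nat)" for xs
    using max_pref_nonneg[of xs] by (cases k) auto
  then show ?thesis
    unfolding count_max_sum sum_sign_seqs_Suc by (simp add: sum.distrib)
qed

(* The distribution of the maximal prefix sum (the reflection principle), obtained by
   checking that the binomial coefficients satisfy the same recurrence. *)
lemma count_max_formula: "count_max m k = m choose ((m + k + 1) div 2)"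
proof (induction m arbitrary: k)
  case 0
  have "{xs \<in> sign_seqs 0. max_pref xs = int k} = (if k = 0 then {[]} else {})"
    by (auto simp: sign_seqs_def)
  then show ?case by (simp add: count_max_def)
next
  case (Suc m)
  show ?case
  proof (cases k)
    case 0
    have "m choose ((m + 1) div 2) = m choose (m div 2)"
    proof (cases "even m")
      case False
      then have "(m + 1) div 2 = m - m div 2" by presburger
      then show ?thesis by (simp add: binomial_symmetric[of "m div 2" m])
    qed (simp add: even_Suc_div_two)
    then show ?thesis
      using Suc.IH \<open>k = 0\<close> by (simp add: count_max_Suc)
  next
    case (Suc k')
    have "(m + k' + 3) div 2 = Suc ((m + k' + 1) div 2)"
      by simp
    then show ?thesis
      using Suc.IH \<open>k = Suc k'\<close> by (simp add: count_max_Suc)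
  qed
qed

(* The maxima of 1#xs and (-1)#xs add up to 2 * max_pref xs, plus 1 if it is 0. *)
lemma max_total_Suc: "max_total (Suc m) = 2 * max_total m + int (m choose ((m + 1) div 2))"
proof -
  have "max_pref (1 # xs) + max_pref ((-1) # xs) = 2 * max_pref xs + of_bool (max_pref xs = 0)" for xs
    using max_pref_nonneg[of xs] by auto
  then have "max_total (Suc m) = 2 * max_total m + int (count_max m 0)"
    unfolding max_total_def sum_sign_seqs_Suc count_max_sum
    by (simp add: sum.distrib sum_distrib_left)
  then show ?thesis
    by (simp add: count_max_formula)
qed

(* The amount by which |End(P_(m+1))| falls short of (m+2) 2^m. *)
definition deficit :: "nat \<Rightarrow> int" where
  "deficit m = 2 * max_total m + 2 ^ m"

lemma deficit_Suc: "deficit (Suc m) = 2 * deficit m + 2 * int (m choose ((m + 1) div 2))"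
  by (simp add: deficit_def max_total_Suc)

lemma choose_middle_double: "2 * ((2 * j + 1) choose (j + 1)) = (2 * j + 2) choose (j + 1)"
proof -
  have "(2 * j + 1) choose j = (2 * j + 1) choose (j + 1)"
    using binomial_symmetric[of j "2 * j + 1"] by simp
  then show ?thesis
    using binomial_Suc_Suc[of "2 * j + 1" j] by simp
qed

lemma central_binomial_Suc: "(j + 1) * ((2 * j + 2) choose (j + 1)) = 2 * (2 * j + 1) * ((2 * j) choose j)"
proof -
  have "(j + 1) * ((2 * j + 1) choose (j + 1)) = (2 * j + 1) * ((2 * j) choose j)"
    using Suc_times_binomial[of j "2 * j"] by simp
  then show ?thesis
    unfolding choose_middle_double[symmetric] by (metis mult.assoc mult.left_commute)
qed

lemma deficit_odd_step:
  assumes "deficit (2 * j) = int ((4 * j + 1) * ((2 * j) choose j))"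
  shows "deficit (2 * j + 1) = int ((2 * j + 2) * ((2 * j + 2) choose (j + 1)))"
proof -
  have "deficit (2 * j + 1) = 2 * deficit (2 * j) + 2 * int ((2 * j) choose j)"
    using deficit_Suc[of "2 * j"] by simp
  also have "\<dots> = int (2 * (2 * (2 * j + 1) * ((2 * j) choose j)))"
    using assms by (simp add: algebra_simps)
  also have "\<dots> = int ((2 * j + 2) * ((2 * j + 2) choose (j + 1)))"
    unfolding central_binomial_Suc[symmetric] by (simp add: algebra_simps del: binomial_Suc_Suc)
  finally show ?thesis .
qed

lemma deficit_even_step:
  assumes "deficit (2 * j + 1) = int ((2 * j + 2) * ((2 * j + 2) choose (j + 1)))"
  shows "deficit (2 * j + 2) = int ((4 * j + 5) * ((2 * j + 2) choose (j + 1)))"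
proof -
  have "deficit (2 * j + 2) = 2 * deficit (2 * j + 1) + 2 * int ((2 * j + 1) choose (j + 1))"
    using deficit_Suc[of "2 * j + 1"] by simp
  also have "\<dots> = 2 * deficit (2 * j + 1) + int ((2 * j + 2) choose (j + 1))"
    unfolding choose_middle_double[symmetric] by simp
  finally show ?thesis
    using assms by (simp add: algebra_simps del: binomial_Suc_Suc)
qed

lemma deficit_formula:
  "deficit (2 * j) = int ((4 * j + 1) * ((2 * j) choose j)) \<and>
   deficit (2 * j + 1) = int ((2 * j + 2) * ((2 * j + 2) choose (j + 1)))"
proof (induction j)
  case 0
  have "sign_seqs 0 = {[]}"
    by (auto simp: sign_seqs_def)
  then have "max_total 0 = 0"
    by (simp add: max_total_def)
  then show ?case
    by (simp add: deficit_def max_total_Suc)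
next
  case (Suc j)
  then have "deficit (2 * Suc j) = int ((4 * Suc j + 1) * ((2 * Suc j) choose Suc j))"
    using deficit_even_step[of j] by (simp add: algebra_simps del: binomial_Suc_Suc)
  then show ?case
    using deficit_odd_step[of "Suc j"] by simp
qed

lemma card_path_End_deficit:
  assumes "n \<ge> 1"
  shows "int (card (path_End n)) = int ((n + 1) * 2 ^ (n - 1)) - deficit (n - 1)"
proof -
  obtain m where "n = Suc m" using assms by (cases n) auto
  then show ?thesis
    using card_path_End_Suc[of m] by (simp add: deficit_def algebra_simps)
qed

theorem mainTheorem7:
  fixes n :: nat
  assumes "n \<ge> 1"
  shows "int (card (path_End n)) =
    (if odd n
     then int ((n + 1) * 2 ^ (n - 1)) - int (2 * n - 1) * int ((n - 1) choose ((n - 1) div 2))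
     else int ((n + 1) * 2 ^ (n - 1)) - int n * int (n choose (n div 2)))"
proof (cases "odd n")
  case True
  then obtain j where n: "n = 2 * j + 1" by (rule oddE)
  then have "deficit (n - 1) = int (2 * n - 1) * int ((n - 1) choose ((n - 1) div 2))"
    using deficit_formula[of j] by (simp add: algebra_simps)
  then show ?thesis
    using True card_path_End_deficit[OF assms] by simp
next
  case False
  have "\<exists>j. n = 2 * j + 2"
    using False assms by presburger
  then obtain j where n: "n = 2 * j + 2" ..
  then have "deficit (n - 1) = int n * int (n choose (n div 2))"
    using deficit_formula[of j] by (simp add: algebra_simps del: binomial_Suc_Suc)
  then show ?thesis
    using False card_path_End_deficit[OF assms] by simp
qed

end
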